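(* Let $m<M$ be real numbers and let $X$ be a random variable taking values in $[m,M]$, either discrete (taking finitely many values $x_1,\dots,x_n\in[m,M]$ with probabilities $p_1,\dots,p_n$) or continuous (with probability density $f$ on $[m,M]$). Let $\mu_4$ denote the fourth central moment of $X$. Then $$\mu_4\le \frac{(M-m)^4}{12}.$$
   Context: The mean is $\mu_1'=\sum_{i=1}^n p_i x_i$ (discrete case) or $\mu_1'=\int_m^M x f(x)\,dx$ (continuous case), where $\sum p_i=1$, resp. $\int_m^M f(x)\,dx=1$. The $r$-th central moment is $\mu_r=\sum_{i=1}^n p_i (x_i-\mu_1')^r$, resp. $\mu_r=\int_m^M (x-\mu_1')^r f(x)\,dx$. *)

theory Defs
  imports "HOL-Analysis.Analysis"
begin

definition disc_mean :: "nat \<Rightarrow> (nat \<Rightarrow> real) \<Rightarrow> (nat \<Rightarrow> real) \<Rightarrow> real" where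
  "disc_mean n p x = (\<Sum>i<n. p i * x i)"

definition disc_central_moment :: "nat \<Rightarrow> nat \<Rightarrow> (nat \<Rightarrow> real) \<Rightarrow> (nat \<Rightarrow> real) \<Rightarrow> real" where
  "disc_central_moment r n p x = (\<Sum>i<n. p i * (x i - disc_mean n p x) ^ r)"

definition cont_mean :: "real \<Rightarrow> real \<Rightarrow> (real \<Rightarrow> real) \<Rightarrow> real" where
  "cont_mean m M f = integral {m..M} (\<lambda>t. t * f t)"

definition cont_central_moment :: "nat \<Rightarrow> real \<Rightarrow> real \<Rightarrow> (real \<Rightarrow> real) \<Rightarrow> real" where
  "cont_central_moment r m M f = integral {m..M} (\<lambda>t. (t - cont_mean m M f) ^ r * f t)"

end

theory Submission
  imports Defs
begin

text \<open>Put \<open>c\<close> for the mean, \<open>a = c - m\<close>, \<open>b = M - c\<close>. On \<open>[-a, b]\<close> the convex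
function \<open>y\<^sup>4\<close> lies below its chord through \<open>(-a, a\<^sup>4)\<close> and \<open>(b, b\<^sup>4)\<close>. Integrating
\<open>(X - c)\<^sup>4\<close> against the chord, the linear term drops out because \<open>c\<close> is the mean, so
\<open>\<mu>\<^sub>4 \<le> ab(a\<^sup>2 - ab + b\<^sup>2)\<close>. Finally
\<open>12ab(a\<^sup>2 - ab + b\<^sup>2) = (a + b)\<^sup>4 - (6ab - (a + b)\<^sup>2)\<^sup>2\<close> and \<open>a + b = M - m\<close>.\<close>

lemma power4_le_chord:
  fixes a b y :: real
  assumes "- a \<le> y" "y \<le> b"
  shows "y ^ 4 \<le> a * b * (a\<^sup>2 - a * b + b\<^sup>2) + (b - a) * (a\<^sup>2 + b\<^sup>2) * y"
proof -
  define q where "q = y\<^sup>2 + (b - a) * y + (a\<^sup>2 - a * b + b\<^sup>2)"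
  have four_q: "4 * q = (2 * y + (b - a))\<^sup>2 + 2 * (a - b)\<^sup>2 + (a + b)\<^sup>2"
    unfolding q_def by algebra
  have "0 \<le> 4 * q"
    unfolding four_q by simp
  then have "0 \<le> q"
    by simp
  moreover have "(y + a) * (y - b) \<le> 0"
    using assms by (simp add: mult_nonneg_nonpos)
  ultimately have "(y + a) * (y - b) * q \<le> 0"
    by (simp add: mult_nonpos_nonneg)
  moreover have "(y + a) * (y - b) * q
      = y ^ 4 - (a * b * (a\<^sup>2 - a * b + b\<^sup>2) + (b - a) * (a\<^sup>2 + b\<^sup>2) * y)"
    unfolding q_def by algebra
  ultimately show ?thesis
    by simp
qed

lemma chord_intercept_le:
  fixes a b :: real
  shows "a * b * (a\<^sup>2 - a * b + b\<^sup>2) \<le> (a + b) ^ 4 / 12"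
proof -
  have "12 * (a * b * (a\<^sup>2 - a * b + b\<^sup>2)) = (a + b) ^ 4 - (6 * a * b - (a + b)\<^sup>2)\<^sup>2"
    by algebra
  then have "12 * (a * b * (a\<^sup>2 - a * b + b\<^sup>2)) \<le> (a + b) ^ 4"
    by simp
  then show ?thesis
    by (simp add: field_simps)
qed

lemma continuous_times_nonneg_integrable:
  fixes f g :: "real \<Rightarrow> real"
  assumes "continuous_on {m..M} g" and "\<forall>t\<in>{m..M}. 0 \<le> f t" and "f integrable_on {m..M}"
  shows "(\<lambda>t. g t * f t) integrable_on {m..M}"
proof -
  have "f absolutely_integrable_on {m..M}"
    using assms(2,3) by (intro nonnegative_absolutely_integrable_1) auto
  moreover have "g \<in> borel_measurable (lebesgue_on {m..M})"
    using assms(1) by (rule continuous_imp_measurable_on_sets_lebesgue) simp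
  moreover have "bounded (g ` {m..M})"
    using assms(1) by (intro compact_imp_bounded compact_continuous_image) auto
  ultimately have "(\<lambda>t. g t * f t) absolutely_integrable_on {m..M}"
    by (intro absolutely_integrable_bounded_measurable_product_real) auto
  then show ?thesis
    by (rule set_lebesgue_integral_eq_integral(1))
qed

lemma disc_central_moment_4_le:
  fixes m M :: real
  assumes "\<forall>i<n. x i \<in> {m..M} \<and> 0 \<le> p i" and "(\<Sum>i<n. p i) = 1"
  shows "disc_central_moment 4 n p x \<le> (M - m) ^ 4 / 12"
proof -
  define c where "c = disc_mean n p x"
  define a where "a = c - m"
  define b where "b = M - c"
  define A where "A = a * b * (a\<^sup>2 - a * b + b\<^sup>2)"
  define B where "B = (b - a) * (a\<^sup>2 + b\<^sup>2)"
  have "disc_central_moment 4 n p x = (\<Sum>i<n. p i * (x i - c) ^ 4)"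
    unfolding disc_central_moment_def c_def ..
  also have "\<dots> \<le> (\<Sum>i<n. p i * (A + B * (x i - c)))"
    using assms(1) power4_le_chord[of a _ b]
    by (intro sum_mono mult_left_mono) (auto simp: a_def b_def A_def B_def)
  also have "\<dots> = A * (\<Sum>i<n. p i) + B * ((\<Sum>i<n. p i * x i) - c * (\<Sum>i<n. p i))"
    by (simp add: algebra_simps sum.distrib sum_distrib_left sum_subtractf)
  also have "\<dots> = A"
    using assms(2) by (simp add: c_def disc_mean_def)
  also have "\<dots> \<le> (M - m) ^ 4 / 12"
    using chord_intercept_le[of a b] by (simp add: A_def a_def b_def)
  finally show ?thesis .
qed

lemma cont_central_moment_4_le:
  fixes m M :: real and f :: "real \<Rightarrow> real"
  assumes "\<forall>t\<in>{m..M}. 0 \<le> f t" and "f integrable_on {m..M}" and "integral {m..M} f = 1"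
  shows "cont_central_moment 4 m M f \<le> (M - m) ^ 4 / 12"
proof -
  define c where "c = cont_mean m M f"
  define a where "a = c - m"
  define b where "b = M - c"
  define A where "A = a * b * (a\<^sup>2 - a * b + b\<^sup>2)"
  define B where "B = (b - a) * (a\<^sup>2 + b\<^sup>2)"
  have integrable: "(\<lambda>t. g t * f t) integrable_on {m..M}" if "continuous_on {m..M} g" for g
    using that assms(1,2) by (rule continuous_times_nonneg_integrable)
  have "cont_central_moment 4 m M f = integral {m..M} (\<lambda>t. (t - c) ^ 4 * f t)"
    unfolding cont_central_moment_def c_def ..
  also have "\<dots> \<le> integral {m..M} (\<lambda>t. (A + B * (t - c)) * f t)"
    using assms(1) power4_le_chord[of a _ b]
    by (intro integral_le integrable mult_right_mono continuous_intros)
       (auto simp: a_def b_def A_def B_def)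
  also have "\<dots> = integral {m..M} (\<lambda>t. (A - B * c) * f t + B * (t * f t))"
    by (simp add: algebra_simps)
  also have "\<dots> = (A - B * c) * integral {m..M} f + B * integral {m..M} (\<lambda>t. t * f t)"
    using assms(2) integrable[of "\<lambda>t. t"]
    by (subst integral_add) (auto intro: integrable_on_mult_right continuous_on_id)
  also have "\<dots> = A"
    using assms(3) by (simp add: c_def cont_mean_def algebra_simps)
  also have "\<dots> \<le> (M - m) ^ 4 / 12"
    using chord_intercept_le[of a b] by (simp add: A_def a_def b_def)
  finally show ?thesis .
qed

theorem theorem2p1:
  fixes m M :: real
  assumes "m < M"
  shows "(\<forall>(n::nat) (p::nat \<Rightarrow> real) (x::nat \<Rightarrow> real).
            (\<forall>i<n. x i \<in> {m..M} \<and> p i \<ge> 0) \<and> (\<Sum>i<n. p i) = 1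
            \<longrightarrow> disc_central_moment 4 n p x \<le> (M - m) ^ 4 / 12)
       \<and> (\<forall>f::real \<Rightarrow> real.
            (\<forall>t\<in>{m..M}. f t \<ge> 0) \<and> f integrable_on {m..M} \<and> integral {m..M} f = 1
            \<longrightarrow> cont_central_moment 4 m M f \<le> (M - m) ^ 4 / 12)"
proof (intro conjI allI impI)
  show "disc_central_moment 4 n p x \<le> (M - m) ^ 4 / 12"
    if "(\<forall>i<n. x i \<in> {m..M} \<and> p i \<ge> 0) \<and> (\<Sum>i<n. p i) = 1" for n p x
    using that by (intro disc_central_moment_4_le) auto
  show "cont_central_moment 4 m M f \<le> (M - m) ^ 4 / 12"
    if "(\<forall>t\<in>{m..M}. f t \<ge> 0) \<and> f integrable_on {m..M} \<and> integral {m..M} f = 1" for f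
    using that by (intro cont_central_moment_4_le) auto
qed

end
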